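(* Let $(U,V)$ be a pair of random variables taking values in finite sets $\mathcal{U}\times\mathcal{V}$ with joint probability mass function $p(u,v)$. Let $\mathcal{U}_1,\dots,\mathcal{U}_{\tilde N_u}$ be a partition of $\mathcal{U}$ into nonempty pairwise disjoint blocks and $\mathcal{V}_1,\dots,\mathcal{V}_{\tilde N_v}$ a partition of $\mathcal{V}$ into nonempty pairwise disjoint blocks (the synonymous mappings), with associated semantic variables $\tilde U,\tilde V$. Then (chain rule of semantic entropy) $$H_s(\tilde U)+H_s(\tilde V\mid U)\le H_s(\tilde U,\tilde V)\le H(U)+H_s(\tilde V\mid U)\le H(U,V).$$
   Context: For $p(\mathcal{U}_{i_s})=\sum_{u\in\mathcal{U}_{i_s}}p(u)$, the semantic entropy is $H_s(\tilde U)=-\sum_{i_s}p(\mathcal{U}_{i_s})\log p(\mathcal{U}_{i_s})$. The semantic joint entropy is $H_s(\tilde U,\tilde V)=-\sum_{i_s=1}^{\tilde N_u}\sum_{j_s=1}^{\tilde N_v}p(\mathcal{U}_{i_s}\times\mathcal{V}_{j_s})\log p(\mathcal{U}_{i_s}\times\mathcal{V}_{j_s})$, with $p(\mathcal{U}_{i_s}\times\mathcal{V}_{j_s})=\sum_{(u,v)\in\mathcal{U}_{i_s}\times\mathcal{V}_{j_s}}p(u,v)$. The semantic conditional entropy is $H_s(\tilde V\mid U)=-\sum_{u\in\mathcal{U}:p(u)>0}\sum_{j_s=1}^{\tilde N_v}p(u)\,p(\mathcal{V}_{j_s}\mid u)\log p(\mathcal{V}_{j_s}\mid u)$, with $p(\mathcal{V}_{j_s}\mid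 u)=\sum_{v\in\mathcal{V}_{j_s}}p(v\mid u)$ (the conditional synonymous mapping uses the same partition of $\mathcal{V}$ for every $u$). $H(U)$, $H(U,V)$ are Shannon entropies; logarithms are to base 2 and $0\log 0=0$. *)

theory Defs
  imports Complex_Main
begin

definition ent :: "real \<Rightarrow> real" where
  "ent x = (if x = 0 then 0 else - x * log 2 x)"

definition is_partition :: "'a set set \<Rightarrow> 'a set \<Rightarrow> bool" where
  "is_partition P S \<longleftrightarrow> (\<Union>P = S) \<and> (\<forall>B\<in>P. B \<noteq> {}) \<and>
     (\<forall>B\<in>P. \<forall>C\<in>P. B \<noteq> C \<longrightarrow> B \<inter> C = {})"

definition margU :: "'u \<Rightarrow> 'v set \<Rightarrow> ('u \<Rightarrow> 'v \<Rightarrow> real) \<Rightarrow> real" where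
  "margU u V p = (\<Sum>v\<in>V. p u v)"

definition H_U :: "'u set \<Rightarrow> 'v set \<Rightarrow> ('u \<Rightarrow> 'v \<Rightarrow> real) \<Rightarrow> real" where
  "H_U U V p = (\<Sum>u\<in>U. ent (margU u V p))"

definition H_UV :: "'u set \<Rightarrow> 'v set \<Rightarrow> ('u \<Rightarrow> 'v \<Rightarrow> real) \<Rightarrow> real" where
  "H_UV U V p = (\<Sum>u\<in>U. \<Sum>v\<in>V. ent (p u v))"

definition Hs_U :: "'u set set \<Rightarrow> 'v set \<Rightarrow> ('u \<Rightarrow> 'v \<Rightarrow> real) \<Rightarrow> real" where
  "Hs_U PU V p = (\<Sum>B\<in>PU. ent (\<Sum>u\<in>B. margU u V p))"

definition Hs_UV :: "'u set set \<Rightarrow> 'v set set \<Rightarrow> ('u \<Rightarrow> 'v \<Rightarrow> real) \<Rightarrow> real" where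
  "Hs_UV PU PV p = (\<Sum>B\<in>PU. \<Sum>C\<in>PV. ent (\<Sum>(u,v)\<in>B \<times> C. p u v))"

definition condp :: "'v set \<Rightarrow> 'u \<Rightarrow> 'v set \<Rightarrow> ('u \<Rightarrow> 'v \<Rightarrow> real) \<Rightarrow> real" where
  "condp C u V p = (\<Sum>v\<in>C. p u v / margU u V p)"

definition Hs_V_given_U :: "'u set \<Rightarrow> 'v set \<Rightarrow> 'v set set \<Rightarrow> ('u \<Rightarrow> 'v \<Rightarrow> real) \<Rightarrow> real" where
  "Hs_V_given_U U V PV p =
     (\<Sum>u\<in>{u\<in>U. margU u V p > 0}. \<Sum>C\<in>PV. margU u V p * ent (condp C u V p))"

end

theory Submission
  imports Defs
begin

text \<open>
  Write \<open>q u C = margU u C p\<close> for the mass of \<open>{u} \<times> C\<close> and \<open>m u = margU u V p\<close>.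
  Since \<open>m u * ent (q u C / m u) = - q u C * log 2 (q u C / m u)\<close>, the chain rule shows that
  \<open>H_U + Hs_V_given_U\<close> equals \<open>\<Sum>u \<Sum>C. ent (q u C)\<close>, the entropy of \<open>U\<close> jointly with the
  block of \<open>V\<close>. Merging outcomes can only decrease entropy, because \<open>- x log x\<close> is
  subadditive; merging the \<open>v\<close> within a block gives the right-hand inequality, merging the
  \<open>u\<close> within a block the middle one. The left-hand inequality says that conditioning the
  block of \<open>V\<close> on the block of \<open>U\<close> instead of on \<open>U\<close> itself cannot lower its entropy: it
  is the log-sum inequality applied within each block of the partition of \<open>U\<close>.
\<close>

lemma ent_add_le:
  assumes "0 \<le> a" "0 \<le> b"
  shows "ent (a + b) \<le> ent a + ent b"
proof (cases "a = 0 \<or> b = 0")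
  case True
  then show ?thesis by (auto simp: ent_def)
next
  case False
  then have "0 < a" "0 < b" using assms by auto
  then have "a * log 2 a + b * log 2 b \<le> a * log 2 (a + b) + b * log 2 (a + b)"
    by (intro add_mono mult_left_mono) auto
  then show ?thesis
    using \<open>0 < a\<close> \<open>0 < b\<close> by (simp add: ent_def algebra_simps)
qed

lemma ent_sum_le:
  assumes "finite A" "\<And>a. a \<in> A \<Longrightarrow> 0 \<le> f a"
  shows "ent (sum f A) \<le> (\<Sum>a\<in>A. ent (f a))"
  using assms
proof (induction A rule: finite_induct)
  case empty
  then show ?case by (simp add: ent_def)
next
  case (insert x F)
  then have "ent (sum f (insert x F)) \<le> ent (f x) + ent (sum f F)"
    by (simp add: ent_add_le sum_nonneg)
  also have "\<dots> \<le> ent (f x) + (\<Sum>a\<in>F. ent (f a))"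
    using insert by simp
  finally show ?case
    using insert by simp
qed

lemma mult_ent_divide:
  assumes "m \<noteq> 0"
  shows "m * ent (q / m) = - (q * log 2 (q / m))"
  using assms by (simp add: ent_def)

lemma mult_log_divide_ge:
  fixes b c x y :: real
  assumes "1 < b" "0 \<le> x" "0 \<le> y" "0 < x \<Longrightarrow> 0 < y" "0 < c"
  shows "x * log b c + (x - c * y) / ln b \<le> x * log b (x / y)"
proof (cases "x = 0")
  case True
  then show ?thesis
    using assms by (simp add: divide_nonpos_pos)
next
  case False
  then have "0 < x" "0 < y" using assms by auto
  have "x * ln c - x * ln (x / y) = x * ln (c * y / x)"
    using \<open>0 < x\<close> \<open>0 < y\<close> \<open>0 < c\<close> by (simp add: ln_div ln_mult algebra_simps)
  also have "\<dots> \<le> x * (c * y / x - 1)"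
    using \<open>0 < x\<close> \<open>0 < y\<close> \<open>0 < c\<close> by (intro mult_left_mono ln_le_minus_one) auto
  also have "\<dots> = c * y - x"
    using \<open>0 < x\<close> by (simp add: field_simps)
  finally have "(x * ln c + (x - c * y)) / ln b \<le> x * ln (x / y) / ln b"
    using \<open>1 < b\<close> by (intro divide_right_mono) auto
  then show ?thesis
    by (simp add: log_def add_divide_distrib)
qed

lemma log_sum_inequality:
  fixes x y :: "'a \<Rightarrow> real"
  assumes "1 < b" "finite A" "\<And>a. a \<in> A \<Longrightarrow> 0 \<le> x a" "\<And>a. a \<in> A \<Longrightarrow> 0 \<le> y a"
    and "\<And>a. a \<in> A \<Longrightarrow> 0 < x a \<Longrightarrow> 0 < y a"
  shows "sum x A * log b (sum x A / sum y A) \<le> (\<Sum>a\<in>A. x a * log b (x a / y a))"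
proof (cases "sum x A = 0")
  case True
  then have "\<forall>a\<in>A. x a = 0"
    using assms(2,3) sum_nonneg_eq_0_iff by blast
  then show ?thesis
    using True by simp
next
  case False
  \<comment> \<open>with this choice of \<open>c\<close> the error terms of \<open>mult_log_divide_ge\<close> cancel\<close>
  define c where "c = sum x A / sum y A"
  obtain a where "a \<in> A" "x a \<noteq> 0"
    using False by (meson sum.neutral)
  then have "0 < y a"
    using assms(3,5) by (simp add: less_le)
  also have "y a \<le> sum y A"
    using \<open>a \<in> A\<close> assms(2,4) by (intro member_le_sum) auto
  finally have "0 < sum y A" .
  moreover have "0 < sum x A"
    using False assms(3) by (simp add: less_le sum_nonneg)
  ultimately have "0 < c"
    by (simp add: c_def)
  have "sum x A * log b c = sum x A * log b c + (sum x A - c * sum y A) / ln b"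
    using \<open>0 < sum y A\<close> by (simp add: c_def)
  also have "\<dots> = (\<Sum>a\<in>A. x a * log b c + (x a - c * y a) / ln b)"
    by (simp add: sum.distrib sum_distrib_right sum_subtractf sum_distrib_left
        flip: sum_divide_distrib)
  also have "\<dots> \<le> (\<Sum>a\<in>A. x a * log b (x a / y a))"
    using assms \<open>0 < c\<close> by (intro sum_mono mult_log_divide_ge) auto
  finally show ?thesis
    by (simp add: c_def)
qed

lemma sum_neg_mult_log_divide_sum:
  assumes "finite I" "\<And>i. i \<in> I \<Longrightarrow> 0 \<le> q i"
  shows "(\<Sum>i\<in>I. - (q i * log 2 (q i / sum q I))) = (\<Sum>i\<in>I. ent (q i)) - ent (sum q I)"
proof (cases "sum q I = 0")
  case True
  then have "\<forall>i\<in>I. q i = 0"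
    using assms sum_nonneg_eq_0_iff by blast
  then show ?thesis
    using True by (simp add: ent_def)
next
  case False
  then have "0 < sum q I"
    using assms by (simp add: less_le sum_nonneg)
  have "- (q i * log 2 (q i / sum q I)) = ent (q i) + q i * log 2 (sum q I)" if "i \<in> I" for i
    using assms(2)[OF that] \<open>0 < sum q I\<close>
    by (cases "q i = 0") (auto simp: ent_def log_divide algebra_simps)
  then have "(\<Sum>i\<in>I. - (q i * log 2 (q i / sum q I)))
      = (\<Sum>i\<in>I. ent (q i)) + sum q I * log 2 (sum q I)"
    by (simp add: sum.distrib sum_distrib_right)
  then show ?thesis
    using False by (simp add: ent_def)
qed

lemma is_partition_finite: "is_partition P S \<Longrightarrow> finite S \<Longrightarrow> finite P"
  unfolding is_partition_def by (metis finite_UnionD)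

lemma is_partition_subset: "is_partition P S \<Longrightarrow> B \<in> P \<Longrightarrow> B \<subseteq> S"
  unfolding is_partition_def by auto

lemma sum_is_partition:
  assumes "is_partition P S" "finite S"
  shows "(\<Sum>B\<in>P. sum f B) = sum f S"
proof -
  have "\<forall>B\<in>P. finite B"
    using assms by (meson finite_subset is_partition_subset)
  then have "sum f (\<Union>P) = (\<Sum>B\<in>P. sum f B)"
    using assms(1) sum.Union_disjoint[of P f] by (simp add: is_partition_def)
  then show ?thesis
    using assms(1) by (simp add: is_partition_def)
qed

lemma Hs_V_given_U_eq:
  assumes "finite U" "finite V" "\<And>u v. u \<in> U \<Longrightarrow> v \<in> V \<Longrightarrow> 0 \<le> p u v"
    and "\<And>C. C \<in> PV \<Longrightarrow> C \<subseteq> V"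
  shows "Hs_V_given_U U V PV p
    = (\<Sum>u\<in>U. \<Sum>C\<in>PV. - (margU u C p * log 2 (margU u C p / margU u V p)))"
proof -
  have "(\<Sum>C\<in>PV. - (margU u C p * log 2 (margU u C p / margU u V p))) = 0"
    if "u \<in> U" "\<not> 0 < margU u V p" for u
  proof -
    have "\<forall>v\<in>V. p u v = 0"
      using that assms(2,3) sum_nonneg_eq_0_iff
      by (metis (no_types, lifting) margU_def order_le_less sum_nonneg)
    then have "margU u C p = 0" if "C \<in> PV" for C
      using assms(4)[OF that] by (auto simp: margU_def intro: sum.neutral)
    then show ?thesis by simp
  qed
  then have "(\<Sum>u\<in>U. \<Sum>C\<in>PV. - (margU u C p * log 2 (margU u C p / margU u V p)))
      = (\<Sum>u\<in>{u\<in>U. 0 < margU u V p}.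
           \<Sum>C\<in>PV. - (margU u C p * log 2 (margU u C p / margU u V p)))"
    using assms(1) by (intro sum.mono_neutral_right) auto
  also have "\<dots> = Hs_V_given_U U V PV p"
    unfolding Hs_V_given_U_def condp_def
    by (intro sum.cong refl) (simp add: mult_ent_divide margU_def flip: sum_divide_distrib)
  finally show ?thesis ..
qed

lemma margU_eq_sum_is_partition:
  "is_partition PV V \<Longrightarrow> finite V \<Longrightarrow> margU u V p = (\<Sum>C\<in>PV. margU u C p)"
  unfolding margU_def by (simp add: sum_is_partition)

lemma H_U_add_Hs_V_given_U:
  assumes "finite U" "finite V" "\<And>u v. u \<in> U \<Longrightarrow> v \<in> V \<Longrightarrow> 0 \<le> p u v"
    and "is_partition PV V"
  shows "H_U U V p + Hs_V_given_U U V PV p = (\<Sum>u\<in>U. \<Sum>C\<in>PV. ent (margU u C p))"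
proof -
  have PV: "finite PV" "\<And>C. C \<in> PV \<Longrightarrow> C \<subseteq> V"
    using is_partition_finite[OF assms(4,2)] is_partition_subset[OF assms(4)] by auto
  have chain: "(\<Sum>C\<in>PV. - (margU u C p * log 2 (margU u C p / margU u V p)))
      = (\<Sum>C\<in>PV. ent (margU u C p)) - ent (margU u V p)" if "u \<in> U" for u
  proof -
    have "0 \<le> margU u C p" if "C \<in> PV" for C
      using PV(2)[OF that] assms(3)[OF \<open>u \<in> U\<close>] by (auto simp: margU_def intro: sum_nonneg)
    then show ?thesis
      using sum_neg_mult_log_divide_sum[of PV "\<lambda>C. margU u C p"] PV(1) assms(2,4)
      by (simp add: margU_eq_sum_is_partition)
  qed
  have "Hs_V_given_U U V PV p
      = (\<Sum>u\<in>U. \<Sum>C\<in>PV. - (margU u C p * log 2 (margU u C p / margU u V p)))"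
    using assms(1-3) PV(2) by (rule Hs_V_given_U_eq)
  also have "\<dots> = (\<Sum>u\<in>U. (\<Sum>C\<in>PV. ent (margU u C p)) - ent (margU u V p))"
    using chain by (rule sum.cong[OF refl])
  finally show ?thesis
    by (simp add: H_U_def sum_subtractf)
qed

lemma sum_ent_margU_le_H_UV:
  assumes "finite V" "\<And>u v. u \<in> U \<Longrightarrow> v \<in> V \<Longrightarrow> 0 \<le> p u v" "is_partition PV V"
  shows "(\<Sum>u\<in>U. \<Sum>C\<in>PV. ent (margU u C p)) \<le> H_UV U V p"
proof -
  have PV: "C \<subseteq> V" "finite C" if "C \<in> PV" for C
    using is_partition_subset[OF assms(3) that] assms(1) finite_subset by auto
  have "(\<Sum>C\<in>PV. ent (margU u C p)) \<le> (\<Sum>v\<in>V. ent (p u v))" if "u \<in> U" for u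
  proof -
    have "(\<Sum>C\<in>PV. ent (margU u C p)) \<le> (\<Sum>C\<in>PV. \<Sum>v\<in>C. ent (p u v))"
      unfolding margU_def using PV assms(2) that by (intro sum_mono ent_sum_le) (auto dest!: PV(1))
    also have "\<dots> = (\<Sum>v\<in>V. ent (p u v))"
      using assms by (simp add: sum_is_partition)
    finally show ?thesis .
  qed
  then show ?thesis
    unfolding H_UV_def by (rule sum_mono)
qed

lemma Hs_UV_eq: "Hs_UV PU PV p = (\<Sum>B\<in>PU. \<Sum>C\<in>PV. ent (\<Sum>u\<in>B. margU u C p))"
  unfolding Hs_UV_def margU_def by (simp only: sum.cartesian_product)

lemma Hs_UV_le_sum_ent_margU:
  assumes "finite U" "finite V" "\<And>u v. u \<in> U \<Longrightarrow> v \<in> V \<Longrightarrow> 0 \<le> p u v"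
    and "is_partition PU U" "\<And>C. C \<in> PV \<Longrightarrow> C \<subseteq> V"
  shows "Hs_UV PU PV p \<le> (\<Sum>u\<in>U. \<Sum>C\<in>PV. ent (margU u C p))"
proof -
  have B: "finite B" "\<And>u. u \<in> B \<Longrightarrow> u \<in> U" if "B \<in> PU" for B
    using is_partition_subset[OF assms(4) that] assms(1) finite_subset by auto
  have q: "0 \<le> margU u C p" if "u \<in> U" "C \<in> PV" for u C
    using assms(3)[OF that(1)] assms(5)[OF that(2)] by (auto simp: margU_def intro: sum_nonneg)
  have "Hs_UV PU PV p \<le> (\<Sum>B\<in>PU. \<Sum>C\<in>PV. \<Sum>u\<in>B. ent (margU u C p))"
    unfolding Hs_UV_eq using B q by (intro sum_mono ent_sum_le) blast+
  also have "\<dots> = (\<Sum>B\<in>PU. \<Sum>u\<in>B. \<Sum>C\<in>PV. ent (margU u C p))"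
    by (intro sum.cong refl sum.swap)
  also have "\<dots> = (\<Sum>u\<in>U. \<Sum>C\<in>PV. ent (margU u C p))"
    using assms(4,1) by (rule sum_is_partition)
  finally show ?thesis .
qed

lemma Hs_U_add_Hs_V_given_U_le_Hs_UV:
  assumes "finite U" "finite V" "\<And>u v. u \<in> U \<Longrightarrow> v \<in> V \<Longrightarrow> 0 \<le> p u v"
    and "is_partition PU U" "is_partition PV V"
  shows "Hs_U PU V p + Hs_V_given_U U V PV p \<le> Hs_UV PU PV p"
proof -
  define q where "q u C = margU u C p" for u C
  define m where "m u = margU u V p" for u
  have PV: "finite PV" "\<And>C. C \<in> PV \<Longrightarrow> C \<subseteq> V"
    using is_partition_finite[OF assms(5,2)] is_partition_subset[OF assms(5)] by auto
  have B: "finite B" "\<And>u. u \<in> B \<Longrightarrow> u \<in> U" if "B \<in> PU" for B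
    using is_partition_subset[OF assms(4) that] assms(1) finite_subset by auto
  have q_nonneg: "0 \<le> q u C" if "u \<in> U" "C \<in> PV" for u C
    using assms(3)[OF that(1)] PV(2)[OF that(2)]
    by (auto simp: q_def margU_def intro: sum_nonneg)
  have q_le_m: "q u C \<le> m u" if "u \<in> U" "C \<in> PV" for u C
    unfolding q_def m_def margU_def using assms(2,3) that PV(2) by (intro sum_mono2) auto
  have weights: "0 \<le> q u C" "0 \<le> m u" "0 < q u C \<Longrightarrow> 0 < m u"
    if "B \<in> PU" "u \<in> B" "C \<in> PV" for B u C
    using q_nonneg q_le_m B(2)[OF that(1,2)] that(3) by force+
  have m_eq: "(\<Sum>u\<in>B. m u) = (\<Sum>C\<in>PV. \<Sum>u\<in>B. q u C)" for B
    unfolding m_def q_def using assms(2,5)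
    by (simp add: margU_eq_sum_is_partition sum.swap[of _ B])
  have "Hs_V_given_U U V PV p = (\<Sum>B\<in>PU. \<Sum>u\<in>B. \<Sum>C\<in>PV. - (q u C * log 2 (q u C / m u)))"
    unfolding q_def m_def using assms(1-3) PV(2)
    by (simp add: Hs_V_given_U_eq sum_is_partition[OF assms(4,1)])
  also have "\<dots> = (\<Sum>B\<in>PU. \<Sum>C\<in>PV. - (\<Sum>u\<in>B. q u C * log 2 (q u C / m u)))"
    by (simp add: sum.swap[of _ PV] sum_negf)
  also have "\<dots> \<le> (\<Sum>B\<in>PU. \<Sum>C\<in>PV.
      - ((\<Sum>u\<in>B. q u C) * log 2 ((\<Sum>u\<in>B. q u C) / (\<Sum>u\<in>B. m u))))"
    using B(1) by (intro sum_mono le_imp_neg_le log_sum_inequality) (auto intro: weights)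
  also have "\<dots> = (\<Sum>B\<in>PU. (\<Sum>C\<in>PV. ent (\<Sum>u\<in>B. q u C)) - ent (\<Sum>u\<in>B. m u))"
    unfolding m_eq using PV(1) B q_nonneg
    by (intro sum.cong refl sum_neg_mult_log_divide_sum) (auto intro: sum_nonneg)
  also have "\<dots> = Hs_UV PU PV p - Hs_U PU V p"
    by (simp add: Hs_UV_eq Hs_U_def q_def m_def sum_subtractf)
  finally show ?thesis by simp
qed

theorem theorem1:
  fixes U :: "'u set" and V :: "'v set" and p :: "'u \<Rightarrow> 'v \<Rightarrow> real"
    and PU :: "'u set set" and PV :: "'v set set"
  assumes "finite U" and "finite V"
    and "\<And>u v. u \<in> U \<Longrightarrow> v \<in> V \<Longrightarrow> p u v \<ge> 0"
    and "(\<Sum>u\<in>U. \<Sum>v\<in>V. p u v) = 1"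
    and "is_partition PU U" and "is_partition PV V"
  shows "Hs_U PU V p + Hs_V_given_U U V PV p \<le> Hs_UV PU PV p
       \<and> Hs_UV PU PV p \<le> H_U U V p + Hs_V_given_U U V PV p
       \<and> H_U U V p + Hs_V_given_U U V PV p \<le> H_UV U V p"
proof (intro conjI)
  show "Hs_U PU V p + Hs_V_given_U U V PV p \<le> Hs_UV PU PV p"
    using assms(1-3,5,6) by (rule Hs_U_add_Hs_V_given_U_le_Hs_UV)
  have H_U_V: "H_U U V p + Hs_V_given_U U V PV p = (\<Sum>u\<in>U. \<Sum>C\<in>PV. ent (margU u C p))"
    using assms(1-3,6) by (rule H_U_add_Hs_V_given_U)
  show "Hs_UV PU PV p \<le> H_U U V p + Hs_V_given_U U V PV p"
    unfolding H_U_V using assms(1-3,5) is_partition_subset[OF assms(6)]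
    by (rule Hs_UV_le_sum_ent_margU)
  show "H_U U V p + Hs_V_given_U U V PV p \<le> H_UV U V p"
    unfolding H_U_V using assms(2,3,6) by (rule sum_ent_margU_le_H_UV)
qed

end
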